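(* There is a constant $C>0$ such that for all integers $n\ge 2$, $D\ge 1$ and $k$ with $0<k\le D$, there exist a deterministic distributed algorithm and, for every graph $G$ of size $n$ and diameter $D$, an advice assignment of size at most $C\,(n^2\log n)/(D-k+1)$, under which the algorithm accomplishes labeled topology recognition in $G$ within time $D-k$.
   Context: Graphs are finite, simple, undirected, connected, with no node labels; at each node of degree $d$ the incident edges carry distinct port numbers $0,\dots,d-1$ (no coherence between endpoints). Isomorphism is a bijection of nodes preserving edges and port numbers at both endpoints. Size = number of nodes; $\log$ is base 2. Communication model (LOCAL): synchronous rounds, all nodes start simultaneously; in each round every node may send arbitrary messages to all neighbours, receives their messages (knowing the arrival port), and performs arbitrary local computation. Initially a node knows only its degree and its advice. Advice: an oracle knowing the graph assigns each node a binary string; the size of advice is the maximum string length. All nodes run the same deterministic algorithm. Labeled topology recognition: all nodes output the same port-labeled graph $H$ with distinct node labels and each node its own label, such that some isomorphism $G\to H$ maps every node to the node carrying the label it output. Time is the number of rounds until all nodes have output (time $0$ means no communication). *)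

theory Defs
  imports Complex_Main
begin

text \<open>Nodes are 0..<gsize G. At node v, port i < deg G v leads to node fst (nbr G v i),
  arriving there at port snd (nbr G v i). Values for ports \<ge> deg are irrelevant.\<close>

record pgraph =
  gsize :: nat
  deg :: "nat \<Rightarrow> nat"
  nbr :: "nat \<Rightarrow> nat \<Rightarrow> nat \<times> nat"

definition adj_rel :: "pgraph \<Rightarrow> (nat \<times> nat) set" where
  "adj_rel G = {(v, u). v < gsize G \<and> (\<exists>i < deg G v. fst (nbr G v i) = u)}"

definition wf_pgraph :: "pgraph \<Rightarrow> bool" where
  "wf_pgraph G \<longleftrightarrow>
     (\<forall>v < gsize G. \<forall>i < deg G v.
        fst (nbr G v i) < gsize G \<and> fst (nbr G v i) \<noteq> v \<and>
        snd (nbr G v i) < deg G (fst (nbr G v i)) \<and>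
        nbr G (fst (nbr G v i)) (snd (nbr G v i)) = (v, i)) \<and>
     (\<forall>v < gsize G. \<forall>i < deg G v. \<forall>j < deg G v.
        fst (nbr G v i) = fst (nbr G v j) \<longrightarrow> i = j)"

definition connected_pgraph :: "pgraph \<Rightarrow> bool" where
  "connected_pgraph G \<longleftrightarrow> gsize G \<ge> 1 \<and>
     (\<forall>u < gsize G. \<forall>v < gsize G. (u, v) \<in> (adj_rel G)\<^sup>*)"

definition gdist :: "pgraph \<Rightarrow> nat \<Rightarrow> nat \<Rightarrow> nat" where
  "gdist G u v = (LEAST d. (u, v) \<in> adj_rel G ^^ d)"

definition diameter :: "pgraph \<Rightarrow> nat" where
  "diameter G = Max {gdist G u v | u v. u < gsize G \<and> v < gsize G}"

definition iso_map :: "pgraph \<Rightarrow> pgraph \<Rightarrow> (nat \<Rightarrow> nat) \<Rightarrow> bool" where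
  "iso_map G H f \<longleftrightarrow> bij_betw f {..<gsize G} {..<gsize H} \<and>
     (\<forall>v < gsize G. deg H (f v) = deg G v \<and>
        (\<forall>i < deg G v. nbr H (f v) i = (f (fst (nbr G v i)), snd (nbr G v i))))"

text \<open>Local states and messages are natural
  numbers (any finite information can be encoded). The initial state depends only on the
  degree and the advice; in each round a node sends message send s i on each port i, and
  updates its state from the received messages indexed by arrival port.
  A node outputs (H, l) at the first round where out gives a value.\<close>

record algorithm =
  init :: "nat \<Rightarrow> bool list \<Rightarrow> nat"
  send :: "nat \<Rightarrow> nat \<Rightarrow> nat"
  trans :: "nat \<Rightarrow> (nat \<Rightarrow> nat) \<Rightarrow> nat"
  out :: "nat \<Rightarrow> (pgraph \<times> nat) option"

fun run :: "algorithm \<Rightarrow> pgraph \<Rightarrow> (nat \<Rightarrow> bool list) \<Rightarrow> nat \<Rightarrow> nat \<Rightarrow> nat" where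
  "run A G adv 0 v = init A (deg G v) (adv v)"
| "run A G adv (Suc t) v =
     trans A (run A G adv t v)
       (\<lambda>j. if j < deg G v
            then send A (run A G adv t (fst (nbr G v j))) (snd (nbr G v j))
            else 0)"

definition outputs_at :: "algorithm \<Rightarrow> pgraph \<Rightarrow> (nat \<Rightarrow> bool list) \<Rightarrow> nat \<Rightarrow> nat
    \<Rightarrow> pgraph \<times> nat \<Rightarrow> bool" where
  "outputs_at A G adv v t res \<longleftrightarrow> out A (run A G adv t v) = Some res \<and>
     (\<forall>t' < t. out A (run A G adv t' v) = None)"

definition solves_ltr :: "algorithm \<Rightarrow> pgraph \<Rightarrow> (nat \<Rightarrow> bool list) \<Rightarrow> nat \<Rightarrow> bool" where
  "solves_ltr A G adv T \<longleftrightarrow>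
     (\<exists>H lab. (\<forall>v < gsize G. \<exists>t \<le> T. outputs_at A G adv v t (H, lab v)) \<and>
              iso_map G H lab)"

definition advice_size_le :: "pgraph \<Rightarrow> (nat \<Rightarrow> bool list) \<Rightarrow> real \<Rightarrow> bool" where
  "advice_size_le G adv b \<longleftrightarrow> (\<forall>v < gsize G. real (length (adv v)) \<le> b)"

end

theory Submission
  imports Defs "HOL-Library.Countable" "HOL-Library.Log_Nat"
begin

text \<open>Let \<open>T = D - k < D\<close>, pick nodes \<open>u\<close>, \<open>z\<close> at distance \<open>D\<close>, and colour each node by its
  distance from \<open>u\<close> modulo \<open>T + 1\<close>. Because distances from \<open>u\<close> change by at most one along an
  edge and range over all of \<open>0..D\<close>, every ball of radius \<open>T\<close> contains nodes of all \<open>T + 1\<close> colours.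
  Write the whole port-labelled graph as a string of \<open>O(n\<^sup>2 log n)\<close> bits, cut it into \<open>T + 1\<close>
  chunks, and give each node its label, its colour and the chunk of its colour: \<open>O(n\<^sup>2 log n / (T + 1))\<close>
  bits. After \<open>T\<close> rounds of flooding every node has seen all chunks, so it can rebuild the graph
  and output it together with its own label.\<close>

lemma adj_rel_wf:
  assumes "wf_pgraph G" "(v, w) \<in> adj_rel G"
  shows "v < gsize G \<and> w < gsize G \<and> (w, v) \<in> adj_rel G"
proof -
  from assms(2) obtain i where i: "v < gsize G" "i < deg G v" "fst (nbr G v i) = w"
    by (auto simp: adj_rel_def)
  with assms(1) have "w < gsize G" "snd (nbr G v i) < deg G w" "nbr G w (snd (nbr G v i)) = (v, i)"
    unfolding wf_pgraph_def by metis+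
  then show ?thesis
    using i by (auto simp: adj_rel_def intro!: exI[of _ "snd (nbr G v i)"])
qed

lemma adj_relpow_sym:
  assumes "wf_pgraph G" "(v, w) \<in> adj_rel G ^^ m"
  shows "(w, v) \<in> adj_rel G ^^ m"
  using assms(2)
proof (induction m arbitrary: w)
  case (Suc m)
  then obtain x where "(v, x) \<in> adj_rel G ^^ m" "(x, w) \<in> adj_rel G"
    by (auto elim: relpow_Suc_E)
  with Suc.IH adj_rel_wf[OF assms(1)] show ?case
    by (meson relpow_Suc_I2)
qed simp

lemma adj_relpow_closed:
  assumes "wf_pgraph G" "(v, w) \<in> adj_rel G ^^ m" "v < gsize G"
  shows "w < gsize G"
  using assms(2,3)
proof (induction m arbitrary: w)
  case (Suc m)
  then obtain x where "(v, x) \<in> adj_rel G ^^ m" "(x, w) \<in> adj_rel G"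
    by (auto elim: relpow_Suc_E)
  with Suc adj_rel_wf[OF assms(1)] show ?case
    by blast
qed simp

lemma deg_less_gsize:
  assumes "wf_pgraph G" "v < gsize G"
  shows "deg G v < gsize G"
proof -
  let ?f = "\<lambda>i. fst (nbr G v i)"
  have "inj_on ?f {..<deg G v}"
    using assms unfolding wf_pgraph_def inj_on_def by blast
  then have "deg G v = card (?f ` {..<deg G v})"
    by (simp add: card_image)
  also have "\<dots> \<le> card ({..<gsize G} - {v})"
    using assms unfolding wf_pgraph_def by (intro card_mono) auto
  finally show ?thesis
    using assms(2) by simp
qed

lemma gdist_le: "(v, w) \<in> adj_rel G ^^ m \<Longrightarrow> gdist G v w \<le> m"
  unfolding gdist_def by (rule Least_le)

lemma gdist_relpow:
  assumes "connected_pgraph G" "v < gsize G" "w < gsize G"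
  shows "(v, w) \<in> adj_rel G ^^ gdist G v w"
proof -
  have "(v, w) \<in> (adj_rel G)\<^sup>*"
    using assms unfolding connected_pgraph_def by blast
  then obtain m where "(v, w) \<in> adj_rel G ^^ m"
    using rtrancl_power by blast
  then show ?thesis
    unfolding gdist_def by (rule LeastI)
qed

lemma diameter_eq_Max:
  "diameter G = Max ((\<lambda>(v, w). gdist G v w) ` ({..<gsize G} \<times> {..<gsize G}))"
  unfolding diameter_def by (rule arg_cong[where f = Max]) auto

lemma diameter_attained:
  assumes "connected_pgraph G"
  obtains u z where "u < gsize G" "z < gsize G" "diameter G = gdist G u z"
proof -
  have "{..<gsize G} \<noteq> {}"
    using assms unfolding connected_pgraph_def by (auto simp: lessThan_empty_iff)
  then have "diameter G \<in> (\<lambda>(v, w). gdist G v w) ` ({..<gsize G} \<times> {..<gsize G})"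
    unfolding diameter_eq_Max by (intro Max_in) auto
  with that show ?thesis
    by auto
qed

lemma gdist_le_diameter:
  assumes "v < gsize G" "w < gsize G"
  shows "gdist G v w \<le> diameter G"
  unfolding diameter_eq_Max using assms by (intro Max_ge) auto

lemma relpow_intermediate_value:
  fixes f :: "'a \<Rightarrow> nat"
  assumes step: "\<And>x y. (x, y) \<in> R \<Longrightarrow> f y \<le> f x + 1"
    and "(v, z) \<in> R ^^ m" "f v < j" "j \<le> f z"
  shows "\<exists>y i. i \<le> m \<and> (v, y) \<in> R ^^ i \<and> (y, z) \<in> R ^^ (m - i) \<and> f y = j"
  using assms(2-)
proof (induction m arbitrary: v)
  case 0
  then show ?case by simp
next
  case (Suc m)
  then obtain x where x: "(v, x) \<in> R" "(x, z) \<in> R ^^ m"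
    using relpow_Suc_D2 by metis
  show ?case
  proof (cases "f x < j")
    case True
    with Suc.IH[OF x(2)] Suc.prems obtain y i
      where "i \<le> m" "(x, y) \<in> R ^^ i" "(y, z) \<in> R ^^ (m - i)" "f y = j"
      by blast
    moreover have "(v, y) \<in> R ^^ Suc i"
      using x(1) \<open>(x, y) \<in> R ^^ i\<close> by (rule relpow_Suc_I2)
    ultimately show ?thesis
      by (intro exI[of _ y] exI[of _ "Suc i"]) auto
  next
    case False
    with step[OF x(1)] Suc.prems(2) have "f x = j"
      by simp
    with x show ?thesis
      by (intro exI[of _ x] exI[of _ 1]) auto
  qed
qed

locale wf_connected_pgraph =
  fixes G :: pgraph
  assumes wf: "wf_pgraph G" and connected: "connected_pgraph G"
begin

lemma gdist_relpow_le:
  assumes "u < gsize G" "y < gsize G" "(y, z) \<in> adj_rel G ^^ m"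
  shows "gdist G u z \<le> gdist G u y + m"
proof -
  have "(u, z) \<in> adj_rel G ^^ gdist G u y O adj_rel G ^^ m"
    using gdist_relpow[OF connected assms(1,2)] assms(3) by blast
  then show ?thesis
    by (simp add: relpow_add[symmetric] gdist_le)
qed

lemma shortest_path_layer:
  assumes u: "u < gsize G" and x: "x < gsize G" and j: "j \<le> gdist G u x"
  obtains y where "(x, y) \<in> adj_rel G ^^ (gdist G u x - j)" "gdist G u y = j"
proof -
  have "(x, u) \<in> adj_rel G ^^ (gdist G u x - j + j)"
    using adj_relpow_sym[OF wf gdist_relpow[OF connected u x]] j by simp
  then obtain y where xy: "(x, y) \<in> adj_rel G ^^ (gdist G u x - j)"
    and yu: "(y, u) \<in> adj_rel G ^^ j"
    by (auto simp: relpow_add)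
  have "gdist G u y \<le> j"
    using gdist_le[OF adj_relpow_sym[OF wf yu]] .
  moreover have "gdist G u x \<le> gdist G u y + (gdist G u x - j)"
    using gdist_relpow_le[OF u adj_relpow_closed[OF wf xy x] adj_relpow_sym[OF wf xy]] .
  ultimately show ?thesis
    using that xy j by simp
qed

lemma gdist_less_gsize:
  assumes u: "u < gsize G" and z: "z < gsize G"
  shows "gdist G u z < gsize G"
proof -
  have "{0..gdist G u z} \<subseteq> gdist G u ` {..<gsize G}"
  proof
    fix j assume "j \<in> {0..gdist G u z}"
    then obtain y where "(z, y) \<in> adj_rel G ^^ (gdist G u z - j)" "gdist G u y = j"
      using shortest_path_layer[OF u z] by auto
    then show "j \<in> gdist G u ` {..<gsize G}"
      using adj_relpow_closed[OF wf _ z] by blast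
  qed
  then have "card {0..gdist G u z} \<le> card (gdist G u ` {..<gsize G})"
    by (intro card_mono) auto
  also have "\<dots> \<le> gsize G"
    using card_image_le[of "{..<gsize G}"] by simp
  finally show ?thesis
    by simp
qed

text \<open>A node at distance \<open>j\<close> from \<open>u\<close> modulo \<open>T + 1\<close> lies within distance \<open>T\<close> of \<open>v\<close>: on a
  shortest path from \<open>v\<close> back to \<open>u\<close> if \<open>j\<close> is at most the distance of \<open>v\<close>, and otherwise on a
  shortest path from \<open>v\<close> towards \<open>z\<close>, along which the distance from \<open>u\<close> climbs in unit steps
  up to the diameter.\<close>
lemma all_residues_nearby:
  assumes u: "u < gsize G" and z: "z < gsize G" and D: "diameter G = gdist G u z"
    and T: "T < diameter G" and v: "v < gsize G" and j: "j \<le> T"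
  shows "\<exists>y i. i \<le> T \<and> (v, y) \<in> adj_rel G ^^ i \<and> gdist G u y mod (T + 1) = j"
proof (cases "j \<le> gdist G u v")
  case True
  define i where "i = (gdist G u v - j) mod (T + 1)"
  have "i \<le> gdist G u v - j"
    unfolding i_def by simp
  then obtain y where y: "(v, y) \<in> adj_rel G ^^ i" "gdist G u y = gdist G u v - i"
    using shortest_path_layer[OF u v, of "gdist G u v - i"] by (metis diff_diff_cancel diff_le_self le_trans)
  have "gdist G u y = j + (gdist G u v - j) div (T + 1) * (T + 1)"
    using y(2) True div_mult_mod_eq[of "gdist G u v - j" "T + 1"] unfolding i_def by linarith
  then have "gdist G u y mod (T + 1) = j"
    using j by (metis mod_mult_self1 mod_less le_imp_less_Suc Suc_eq_plus1)
  moreover have "i \<le> T"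
    unfolding i_def by (simp add: less_Suc_eq_le)
  ultimately show ?thesis
    using y(1) by blast
next
  case False
  have step: "gdist G u y \<le> gdist G u x + 1" if "(x, y) \<in> adj_rel G" for x y
    using gdist_relpow_le[OF u, of x y 1] adj_rel_wf[OF wf that] that by simp
  obtain y i where y: "i \<le> gdist G v z" "(v, y) \<in> adj_rel G ^^ i"
    "(y, z) \<in> adj_rel G ^^ (gdist G v z - i)" "gdist G u y = j"
    using relpow_intermediate_value[where f = "gdist G u", OF step gdist_relpow[OF connected v z], of j] False j T D
    by auto
  have "gdist G u z \<le> j + (gdist G v z - i)"
    using gdist_relpow_le[OF u adj_relpow_closed[OF wf y(2) v] y(3)] y(4) by simp
  moreover have "gdist G v z \<le> gdist G u z"
    using gdist_le_diameter[OF v z] D by simp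
  ultimately have "i \<le> T"
    using y(1) j by linarith
  moreover have "gdist G u y mod (T + 1) = j"
    using y(4) j by simp
  ultimately show ?thesis
    using y(2) by blast
qed

end

definition bit_width :: "nat \<Rightarrow> nat" where
  "bit_width n = floorlog 2 n"

definition bits :: "nat \<Rightarrow> nat \<Rightarrow> bool list" where
  "bits w x = map (bit x) [0..<w]"

definition from_bits :: "bool list \<Rightarrow> nat" where
  "from_bits bs = horner_sum of_bool 2 bs"

lemma length_bits [simp]: "length (bits w x) = w"
  by (simp add: bits_def)

lemma from_bits_map_bit: "from_bits (map (bit x) [0..<w]) = take_bit w x"
  by (simp add: from_bits_def horner_sum_bit_eq_take_bit)

lemma less_two_pow_bit_width: "n < 2 ^ bit_width n"
  using floorlog_bounds[of n 2] by (cases "n = 0") (simp_all add: bit_width_def)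

lemma bit_width_pos: "0 < n \<Longrightarrow> 0 < bit_width n"
  by (simp add: bit_width_def floorlog_def)

lemma take_bit_bit_width: "x < n \<Longrightarrow> take_bit (bit_width n) x = x"
  using less_two_pow_bit_width[of n] by (simp add: take_bit_nat_eq_self)

lemma from_bits_bits: "x < n \<Longrightarrow> from_bits (bits (bit_width n) x) = x"
  by (simp add: bits_def from_bits_map_bit take_bit_bit_width)

lemma bit_width_le_log:
  assumes "n \<ge> 2"
  shows "real (bit_width n) \<le> 2 * log 2 (real n)"
proof -
  have "1 \<le> log 2 (real n)"
    using assms by simp
  moreover have "real (bit_width n) = real (nat \<lfloor>log 2 (real n)\<rfloor>) + 1"
    using assms by (simp add: bit_width_def floorlog_def)
  ultimately show ?thesis
    by linarith
qed

text \<open>The graph is written as a table of \<open>n (2 n + 1)\<close> numbers: the block of node \<open>v\<close> holds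
  its degree followed by the pairs \<open>nbr G v i\<close> for \<open>i < n\<close>, padded with zeros beyond the degree.\<close>
definition graph_table :: "pgraph \<Rightarrow> nat \<Rightarrow> nat \<Rightarrow> nat" where
  "graph_table G n e =
     (let v = e div (2 * n + 1); r = e mod (2 * n + 1); i = (r - 1) div 2 in
      if r = 0 then deg G v
      else if i < deg G v then (if odd r then fst (nbr G v i) else snd (nbr G v i))
      else 0)"

lemma mult_add_div_mod:
  fixes r :: nat
  assumes "r < m"
  shows "(v * m + r) div m = v" and "(v * m + r) mod m = r"
  using assms by (simp_all add: add.commute[of "v * m"])

lemma graph_table_deg: "graph_table G n (v * (2 * n + 1)) = deg G v"
  using mult_add_div_mod[of 0 "2 * n + 1" v] by (simp add: graph_table_def)

lemma graph_table_nbr: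
  assumes "i < n"
  shows "graph_table G n (v * (2 * n + 1) + 1 + 2 * i) = (if i < deg G v then fst (nbr G v i) else 0)"
    and "graph_table G n (v * (2 * n + 1) + 2 + 2 * i) = (if i < deg G v then snd (nbr G v i) else 0)"
proof -
  have "1 + 2 * i < 2 * n + 1" "2 + 2 * i < 2 * n + 1"
    using assms by simp_all
  then show "graph_table G n (v * (2 * n + 1) + 1 + 2 * i) = (if i < deg G v then fst (nbr G v i) else 0)"
    and "graph_table G n (v * (2 * n + 1) + 2 + 2 * i) = (if i < deg G v then snd (nbr G v i) else 0)"
    by (simp_all only: add.assoc mult_add_div_mod graph_table_def Let_def) simp_all
qed

definition table_bit :: "pgraph \<Rightarrow> nat \<Rightarrow> nat \<Rightarrow> bool" where
  "table_bit G n p = bit (graph_table G n (p div bit_width n)) (p mod bit_width n)"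

definition chunk_size :: "nat \<Rightarrow> nat \<Rightarrow> nat" where
  "chunk_size n T = n * (2 * n + 1) * bit_width n div (T + 1) + 1"

definition chunk :: "pgraph \<Rightarrow> nat \<Rightarrow> nat \<Rightarrow> nat \<Rightarrow> bool list" where
  "chunk G n T j = map (\<lambda>q. table_bit G n (j * chunk_size n T + q)) [0..<chunk_size n T]"

definition advice :: "pgraph \<Rightarrow> nat \<Rightarrow> nat \<Rightarrow> (nat \<Rightarrow> nat) \<Rightarrow> nat \<Rightarrow> bool list" where
  "advice G n T c v = bits (bit_width n) v @ bits (bit_width n) (c v) @ chunk G n T (c v)"

definition read_bit :: "nat \<Rightarrow> nat \<Rightarrow> bool list list \<Rightarrow> nat \<Rightarrow> bool" where
  "read_bit n T L p =
     (case find (\<lambda>a. from_bits (take (bit_width n) (drop (bit_width n) a)) = p div chunk_size n T) L of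
        Some a \<Rightarrow> drop (2 * bit_width n) a ! (p mod chunk_size n T)
      | None \<Rightarrow> False)"

definition read_entry :: "nat \<Rightarrow> nat \<Rightarrow> bool list list \<Rightarrow> nat \<Rightarrow> nat" where
  "read_entry n T L e = from_bits (map (\<lambda>q. read_bit n T L (e * bit_width n + q)) [0..<bit_width n])"

definition decode_graph :: "nat \<Rightarrow> nat \<Rightarrow> bool list list \<Rightarrow> pgraph" where
  "decode_graph n T L =
     \<lparr>gsize = n,
      deg = \<lambda>v. if v < n then read_entry n T L (v * (2 * n + 1)) else 0,
      nbr = \<lambda>v i. if v < n \<and> i < read_entry n T L (v * (2 * n + 1))
        then (read_entry n T L (v * (2 * n + 1) + 1 + 2 * i), read_entry n T L (v * (2 * n + 1) + 2 + 2 * i))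
        else (0, 0)\<rparr>"

text \<open>The values of \<open>deg\<close> and \<open>nbr\<close> outside the node and port ranges cannot be recovered from
  the table; \<open>trim_pgraph\<close> sets them to those produced by \<open>decode_graph\<close>.\<close>
definition trim_pgraph :: "pgraph \<Rightarrow> pgraph" where
  "trim_pgraph G =
     \<lparr>gsize = gsize G,
      deg = \<lambda>v. if v < gsize G then deg G v else 0,
      nbr = \<lambda>v i. if v < gsize G \<and> i < deg G v then nbr G v i else (0, 0)\<rparr>"

lemma iso_map_trim_pgraph: "iso_map G (trim_pgraph G) id"
  by (simp add: iso_map_def trim_pgraph_def)

lemma table_size_less_chunks: "n * (2 * n + 1) * bit_width n < (T + 1) * chunk_size n T"
  using dividend_less_times_div[of "T + 1" "n * (2 * n + 1) * bit_width n"]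
  by (simp add: chunk_size_def algebra_simps)

lemma find_Some_mem: "find P xs = Some x \<Longrightarrow> x \<in> set xs \<and> P x"
  by (induction xs) (auto split: if_splits)

locale advice_coding =
  fixes G :: pgraph and n T :: nat and c :: "nat \<Rightarrow> nat"
  assumes wf: "wf_pgraph G" and gsize: "gsize G = n" and T_less: "T < n"
    and colour_le: "\<And>w. c w \<le> T"
begin

definition complete_advice :: "bool list list \<Rightarrow> bool" where
  "complete_advice L \<longleftrightarrow>
     (\<forall>a \<in> set L. \<exists>w < n. a = advice G n T c w) \<and>
     (\<forall>j \<le> T. \<exists>w < n. c w = j \<and> advice G n T c w \<in> set L)"

lemma colour_of_advice:
  "from_bits (take (bit_width n) (drop (bit_width n) (advice G n T c w))) = c w"
  using colour_le[of w] T_less by (simp add: advice_def from_bits_bits)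

lemma read_bit_correct:
  assumes L: "complete_advice L" and p: "p < (T + 1) * chunk_size n T"
  shows "read_bit n T L p = table_bit G n p"
proof -
  let ?P = "\<lambda>a. from_bits (take (bit_width n) (drop (bit_width n) a)) = p div chunk_size n T"
  have "p div chunk_size n T \<le> T"
    using less_mult_imp_div_less[OF p] by simp
  then obtain w0 where "c w0 = p div chunk_size n T" "advice G n T c w0 \<in> set L"
    using L unfolding complete_advice_def by blast
  then have "find ?P L \<noteq> None"
    unfolding find_None_iff using colour_of_advice[of w0] by auto
  then obtain a where a: "find ?P L = Some a"
    by blast
  then have "a \<in> set L" "?P a"
    using find_Some_mem[OF a] by simp_all
  then obtain w where w: "a = advice G n T c w" "c w = p div chunk_size n T"
    using L colour_of_advice unfolding complete_advice_def by metis
  have "drop (2 * bit_width n) a = chunk G n T (p div chunk_size n T)"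
    by (simp add: w advice_def mult_2)
  moreover have "p mod chunk_size n T < chunk_size n T"
    by (simp add: chunk_size_def)
  ultimately have "drop (2 * bit_width n) a ! (p mod chunk_size n T)
      = table_bit G n (p div chunk_size n T * chunk_size n T + p mod chunk_size n T)"
    by (simp add: chunk_def)
  then show ?thesis
    by (simp add: read_bit_def a div_mult_mod_eq)
qed

lemma read_entry_correct:
  assumes L: "complete_advice L" and e: "e < n * (2 * n + 1)"
  shows "read_entry n T L e = take_bit (bit_width n) (graph_table G n e)"
proof -
  have read: "read_bit n T L (e * bit_width n + q) = bit (graph_table G n e) q"
    if q: "q < bit_width n" for q
  proof -
    have "e * bit_width n + q < (e + 1) * bit_width n"
      using q by simp
    also have "\<dots> \<le> n * (2 * n + 1) * bit_width n"
      using e by (intro mult_right_mono) auto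
    finally have "read_bit n T L (e * bit_width n + q) = table_bit G n (e * bit_width n + q)"
      using read_bit_correct[OF L] table_size_less_chunks by (meson less_trans)
    then show ?thesis
      using q by (simp add: table_bit_def mult_add_div_mod)
  qed
  have bits_read: "map (\<lambda>q. read_bit n T L (e * bit_width n + q)) [0..<bit_width n]
      = map (bit (graph_table G n e)) [0..<bit_width n]"
    by (rule map_cong[OF refl]) (simp add: read)
  show ?thesis
    unfolding read_entry_def bits_read by (rule from_bits_map_bit)
qed

lemma decode_graph_correct:
  assumes L: "complete_advice L"
  shows "decode_graph n T L = trim_pgraph G"
proof -
  have entry: "read_entry n T L (v * (2 * n + 1) + r) = x"
    if "v < n" "r < 2 * n + 1" "graph_table G n (v * (2 * n + 1) + r) = x" "x < n" for v r x
  proof -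
    have "v * (2 * n + 1) + r < (v + 1) * (2 * n + 1)"
      using that(2) by simp
    also have "\<dots> \<le> n * (2 * n + 1)"
      using that(1) by (intro mult_right_mono) auto
    finally show ?thesis
      using read_entry_correct[OF L] that(3,4) by (simp add: take_bit_bit_width)
  qed
  have deg: "read_entry n T L (v * (2 * n + 1)) = deg G v" if v: "v < n" for v
    using entry[of v 0] v graph_table_deg deg_less_gsize[OF wf] gsize by simp
  have nbr: "(read_entry n T L (v * (2 * n + 1) + 1 + 2 * i),
              read_entry n T L (v * (2 * n + 1) + 2 + 2 * i)) = nbr G v i"
    if v: "v < n" and i: "i < deg G v" for v i
  proof -
    have "i < n"
      using i deg_less_gsize[OF wf] v gsize by fastforce
    moreover have "fst (nbr G v i) < n" "snd (nbr G v i) < deg G (fst (nbr G v i))"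
      using wf v i gsize unfolding wf_pgraph_def by auto
    moreover from this have "snd (nbr G v i) < n"
      using deg_less_gsize[OF wf] gsize by fastforce
    ultimately show ?thesis
      using entry[of v "1 + 2 * i"] entry[of v "2 + 2 * i"] graph_table_nbr v i
      by (simp add: add.assoc prod_eq_iff)
  qed
  show ?thesis
    using deg nbr gsize by (auto simp: decode_graph_def trim_pgraph_def fun_eq_iff)
qed

end

text \<open>A state, encoded as a number, is the round, the node's own advice, its degree and the advice
  strings collected so far; every node sends its whole state.\<close>
type_synonym flooding_state = "nat \<times> bool list \<times> nat \<times> bool list list"

fun collected :: "pgraph \<Rightarrow> (nat \<Rightarrow> bool list) \<Rightarrow> nat \<Rightarrow> nat \<Rightarrow> bool list list" where
  "collected G adv 0 v = [adv v]"
| "collected G adv (Suc t) v =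
     collected G adv t v @ concat (map (\<lambda>j. collected G adv t (fst (nbr G v j))) [0..<deg G v])"

definition collected_of :: "nat \<Rightarrow> bool list list" where
  "collected_of s = snd (snd (snd (from_nat s :: flooding_state)))"

definition flooding_alg :: "nat \<Rightarrow> nat \<Rightarrow> algorithm" where
  "flooding_alg n T =
     \<lparr>init = \<lambda>d a. to_nat (0 :: nat, a, d, [a]),
      send = \<lambda>s i. s,
      trans = \<lambda>s m. (case from_nat s :: flooding_state of (t, a, d, L) \<Rightarrow>
        to_nat (Suc t, a, d, L @ concat (map (\<lambda>j. collected_of (m j)) [0..<d]))),
      out = \<lambda>s. (case from_nat s :: flooding_state of (t, a, d, L) \<Rightarrow>
        if t = T then Some (decode_graph n T L, from_bits (take (bit_width n) a)) else None)\<rparr>"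

lemma flooding_alg_simps [simp]:
  "init (flooding_alg n T) d a = to_nat (0 :: nat, a, d, [a])"
  "send (flooding_alg n T) s i = s"
  "trans (flooding_alg n T) s m = (case from_nat s :: flooding_state of (t, a, d, L) \<Rightarrow>
     to_nat (Suc t, a, d, L @ concat (map (\<lambda>j. collected_of (m j)) [0..<d])))"
  "out (flooding_alg n T) s = (case from_nat s :: flooding_state of (t, a, d, L) \<Rightarrow>
     if t = T then Some (decode_graph n T L, from_bits (take (bit_width n) a)) else None)"
  by (simp_all add: flooding_alg_def)

lemma run_flooding_alg:
  "run (flooding_alg n T) G adv t v = to_nat (t, adv v, deg G v, collected G adv t v)"
proof (induction t arbitrary: v)
  case 0
  then show ?case
    by simp
next
  case (Suc t)
  have messages: "map (\<lambda>j. collected_of (if j < deg G v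
          then send (flooding_alg n T) (run (flooding_alg n T) G adv t (fst (nbr G v j))) (snd (nbr G v j))
          else 0)) [0..<deg G v]
      = map (\<lambda>j. collected G adv t (fst (nbr G v j))) [0..<deg G v]"
    by (rule map_cong[OF refl]) (simp add: Suc.IH collected_of_def)
  show ?case
    by (simp add: Suc.IH messages)
qed

lemma set_collected:
  assumes wf: "wf_pgraph G" and v: "v < gsize G"
  shows "set (collected G adv t v) = adv ` {w. \<exists>i \<le> t. (v, w) \<in> adj_rel G ^^ i}"
  using v
proof (induction t arbitrary: v)
  case 0
  then show ?case
    by auto
next
  case (Suc t)
  have nbr_closed: "fst (nbr G v j) < gsize G" if "j < deg G v" for j
    using wf Suc.prems that unfolding wf_pgraph_def by blast
  have adj: "(v, x) \<in> adj_rel G \<longleftrightarrow> (\<exists>j < deg G v. x = fst (nbr G v j))" for x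
    using Suc.prems by (auto simp: adj_rel_def)
  have "{w. \<exists>i \<le> Suc t. (v, w) \<in> adj_rel G ^^ i}
      = {w. \<exists>i \<le> t. (v, w) \<in> adj_rel G ^^ i}
        \<union> (\<Union>j < deg G v. {w. \<exists>i \<le> t. (fst (nbr G v j), w) \<in> adj_rel G ^^ i})"
    (is "?lhs = ?rhs")
  proof
    show "?lhs \<subseteq> ?rhs"
    proof
      fix w assume "w \<in> ?lhs"
      then obtain i where i: "i \<le> Suc t" "(v, w) \<in> adj_rel G ^^ i"
        by blast
      show "w \<in> ?rhs"
      proof (cases i)
        case 0
        then show ?thesis
          using i by auto
      next
        case (Suc i')
        then obtain x where "(v, x) \<in> adj_rel G" "(x, w) \<in> adj_rel G ^^ i'"
          using i(2) relpow_Suc_D2 by metis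
        then show ?thesis
          using i(1) Suc adj by auto
      qed
    qed
    show "?rhs \<subseteq> ?lhs"
      using adj by (auto intro: relpow_Suc_I2 le_SucI)
  qed
  then show ?case
    using Suc.IH[OF Suc.prems] Suc.IH[OF nbr_closed] by (simp add: image_Un image_UN atLeast0LessThan)
qed

context advice_coding
begin

lemma label_of_advice: "w < n \<Longrightarrow> from_bits (take (bit_width n) (advice G n T c w)) = w"
  by (simp add: advice_def from_bits_bits)

lemma complete_collected:
  assumes v: "v < n"
    and near: "\<And>j. j \<le> T \<Longrightarrow> \<exists>w i. i \<le> T \<and> (v, w) \<in> adj_rel G ^^ i \<and> c w = j"
  shows "complete_advice (collected G (advice G n T c) T v)"
proof -
  have reach: "set (collected G (advice G n T c) T v)
      = advice G n T c ` {w. \<exists>i \<le> T. (v, w) \<in> adj_rel G ^^ i}"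
    using set_collected[OF wf] v gsize by simp
  have "w < n" if "(v, w) \<in> adj_rel G ^^ i" for w i
    using adj_relpow_closed[OF wf that] v gsize by simp
  then show ?thesis
    unfolding complete_advice_def reach using near by blast
qed

lemma flooding_alg_solves_ltr:
  assumes near: "\<And>v j. v < n \<Longrightarrow> j \<le> T \<Longrightarrow> \<exists>w i. i \<le> T \<and> (v, w) \<in> adj_rel G ^^ i \<and> c w = j"
  shows "solves_ltr (flooding_alg n T) G (advice G n T c) T"
  unfolding solves_ltr_def
proof (intro exI[of _ "trim_pgraph G"] exI[of _ id] conjI allI impI)
  fix v assume "v < gsize G"
  then have v: "v < n"
    using gsize by simp
  have "out (flooding_alg n T) (run (flooding_alg n T) G (advice G n T c) t v)
      = (if t = T then Some (trim_pgraph G, id v) else None)" for t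
    using decode_graph_correct[OF complete_collected[OF v near[OF v]]] label_of_advice[OF v]
    by (simp add: run_flooding_alg)
  then show "\<exists>t \<le> T. outputs_at (flooding_alg n T) G (advice G n T c) v t (trim_pgraph G, id v)"
    unfolding outputs_at_def by auto
qed (rule iso_map_trim_pgraph)

end

lemma length_advice_mult_le:
  assumes n: "n \<ge> 1" and T: "T < n"
  shows "length (advice G n T c v) * (T + 1) \<le> 6 * n ^ 2 * bit_width n"
proof -
  let ?W = "bit_width n"
  have chunk: "chunk_size n T * (T + 1) \<le> n * (2 * n + 1) * ?W + (T + 1)"
    using div_times_less_eq_dividend[of "n * (2 * n + 1) * ?W" "T + 1"]
    by (simp add: chunk_size_def algebra_simps)
  have T_sq: "T + 1 \<le> n ^ 2"
    using T le_square[of n] unfolding power2_eq_square by linarith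
  then have "2 * ?W * (T + 1) \<le> 2 * n ^ 2 * ?W"
    using mult_le_mono2[of "T + 1" "n ^ 2" "2 * ?W"] by (simp add: ac_simps)
  moreover have "n * (2 * n + 1) * ?W \<le> 3 * n ^ 2 * ?W"
    using n by (simp add: power2_eq_square algebra_simps)
  moreover have "T + 1 \<le> n ^ 2 * ?W"
    using mult_le_mono[OF T_sq, of 1 ?W] bit_width_pos[of n] n by simp
  moreover have "length (advice G n T c v) * (T + 1) = 2 * ?W * (T + 1) + chunk_size n T * (T + 1)"
    by (simp add: advice_def chunk_def algebra_simps)
  ultimately show ?thesis
    using chunk by linarith
qed

lemma advice_length_le:
  assumes n: "n \<ge> 2" and T: "T < n"
  shows "real (length (advice G n T c v)) \<le> 12 * real n ^ 2 * log 2 (real n) / real (T + 1)"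
proof -
  have "real (length (advice G n T c v)) * real (T + 1) = real (length (advice G n T c v) * (T + 1))"
    by (simp only: of_nat_mult)
  also have "\<dots> \<le> real (6 * n ^ 2 * bit_width n)"
    using length_advice_mult_le[of n T G c v] n T by (simp only: of_nat_le_iff)
  also have "\<dots> = 6 * real n ^ 2 * real (bit_width n)"
    by simp
  also have "\<dots> \<le> 12 * real n ^ 2 * log 2 (real n)"
    using mult_left_mono[OF bit_width_le_log[OF n], of "6 * real n ^ 2"] by simp
  finally show ?thesis
    by (simp add: pos_le_divide_eq)
qed

lemma ltr_with_distance_colouring:
  assumes G: "wf_pgraph G" "connected_pgraph G" "gsize G = n" and n: "n \<ge> 2"
    and T: "T < diameter G"
  shows "\<exists>adv. advice_size_le G adv (12 * real n ^ 2 * log 2 (real n) / real (T + 1)) \<and>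
    solves_ltr (flooding_alg n T) G adv T"
proof -
  interpret wf_connected_pgraph G
    using G by unfold_locales
  obtain u z where uz: "u < n" "z < n" "diameter G = gdist G u z"
    using diameter_attained[OF connected] G by metis
  define c where "c w = gdist G u w mod (T + 1)" for w
  have "gdist G u z < n"
    using gdist_less_gsize[of u z] uz G by simp
  with T uz have "T < n"
    by simp
  then interpret advice_coding G n T c
    using G by unfold_locales (auto simp: c_def less_Suc_eq_le)
  have "solves_ltr (flooding_alg n T) G (advice G n T c) T"
    using all_residues_nearby[OF _ _ uz(3) T] uz G
    by (intro flooding_alg_solves_ltr) (simp add: c_def)
  moreover have "advice_size_le G (advice G n T c) (12 * real n ^ 2 * log 2 (real n) / real (T + 1))"
    unfolding advice_size_le_def using advice_length_le n \<open>T < n\<close> by simp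
  ultimately show ?thesis
    by blast
qed

theorem theorem6p1:
  shows "\<exists>C::real. C > 0 \<and>
    (\<forall>n D k :: nat. n \<ge> 2 \<longrightarrow> D \<ge> 1 \<longrightarrow> 0 < k \<longrightarrow> k \<le> D \<longrightarrow>
       (\<exists>A :: algorithm. \<forall>G :: pgraph.
          wf_pgraph G \<and> connected_pgraph G \<and> gsize G = n \<and> diameter G = D \<longrightarrow>
          (\<exists>adv. advice_size_le G adv (C * real n ^ 2 * log 2 (real n) / real (D - k + 1)) \<and>
                 solves_ltr A G adv (D - k))))"
proof (intro exI[of _ 12] conjI allI impI)
  fix n D k :: nat
  assume "n \<ge> 2" "0 < k" "k \<le> D"
  then show "\<exists>A. \<forall>G. wf_pgraph G \<and> connected_pgraph G \<and> gsize G = n \<and> diameter G = D \<longrightarrow>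
    (\<exists>adv. advice_size_le G adv (12 * real n ^ 2 * log 2 (real n) / real (D - k + 1)) \<and>
           solves_ltr A G adv (D - k))"
    using ltr_with_distance_colouring[of _ n "D - k"] by (intro exI[of _ "flooding_alg n (D - k)"]) auto
qed simp

end
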